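(* Let $G=(V,E)$ be a graph (a starting position of the Maker-Breaker domination game) with minimum degree $\delta$. If $|V|<2^{\delta}$, then Dominator has a winning strategy for the Maker-Breaker domination game on $G$ when playing second.
   Context: The Maker-Breaker domination game on a finite graph $G=(V,E)$: two players, Dominator and Staller, alternately choose a not-yet-chosen vertex of $G$ (without passing), starting with all vertices unchosen. When all vertices have been chosen, Dominator wins if the set of vertices he chose is a dominating set of $G$; otherwise (some vertex has its whole closed neighborhood chosen by Staller) Staller wins. *)

theory Defs
  imports Main
begin

definition simple_graph :: "'a set \<Rightarrow> ('a \<Rightarrow> 'a \<Rightarrow> bool) \<Rightarrow> bool" where
  "simple_graph V E \<longleftrightarrow> finite V \<and> (\<forall>u v. E u v \<longrightarrow> u \<in> V \<and> v \<in> V)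
     \<and> (\<forall>u v. E u v \<longrightarrow> E v u) \<and> (\<forall>v. \<not> E v v)"

definition nbhd :: "'a set \<Rightarrow> ('a \<Rightarrow> 'a \<Rightarrow> bool) \<Rightarrow> 'a \<Rightarrow> 'a set" where
  "nbhd V E v = {u \<in> V. E v u}"

definition closed_nbhd :: "'a set \<Rightarrow> ('a \<Rightarrow> 'a \<Rightarrow> bool) \<Rightarrow> 'a \<Rightarrow> 'a set" where
  "closed_nbhd V E v = insert v (nbhd V E v)"

definition degree :: "'a set \<Rightarrow> ('a \<Rightarrow> 'a \<Rightarrow> bool) \<Rightarrow> 'a \<Rightarrow> nat" where
  "degree V E v = card (nbhd V E v)"

definition min_degree :: "'a set \<Rightarrow> ('a \<Rightarrow> 'a \<Rightarrow> bool) \<Rightarrow> nat" where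
  "min_degree V E = Min (degree V E ` V)"

definition dominating :: "'a set \<Rightarrow> ('a \<Rightarrow> 'a \<Rightarrow> bool) \<Rightarrow> 'a set \<Rightarrow> bool" where
  "dominating V E D \<longleftrightarrow> D \<subseteq> V \<and> (\<forall>v \<in> V. closed_nbhd V E v \<inter> D \<noteq> {})"

datatype player = Dominator | Staller

text \<open>A position consists of the set D of vertices
chosen by Dominator, the set S chosen by Staller, and the player to move.
\<open>dom_wins V E D S p\<close> holds iff Dominator has a winning strategy from this
position (least fixed point = winning within the finite game tree).\<close>
inductive dom_wins :: "'a set \<Rightarrow> ('a \<Rightarrow> 'a \<Rightarrow> bool) \<Rightarrow> 'a set \<Rightarrow> 'a set \<Rightarrow> player \<Rightarrow> bool"
  for V E where
  finished: "D \<union> S = V \<Longrightarrow> dominating V E D \<Longrightarrow> dom_wins V E D S p"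
| dom_move: "v \<in> V - (D \<union> S) \<Longrightarrow> dom_wins V E (insert v D) S Staller
     \<Longrightarrow> dom_wins V E D S Dominator"
| staller_move: "V - (D \<union> S) \<noteq> {} \<Longrightarrow>
     (\<forall>v \<in> V - (D \<union> S). dom_wins V E D (insert v S) Dominator)
     \<Longrightarrow> dom_wins V E D S Staller"

definition dominator_wins_second :: "'a set \<Rightarrow> ('a \<Rightarrow> 'a \<Rightarrow> bool) \<Rightarrow> bool" where
  "dominator_wins_second V E \<longleftrightarrow> dom_wins V E {} {} Staller"

end

theory Submission
  imports Defs Complex_Main
begin

text \<open>Erdos-Selfridge potential argument. Give every vertex \<open>v\<close> whose closed
neighbourhood contains no Dominator vertex the weight \<open>2 ^ -k\<close>, where \<open>k\<close> is
the number of vertices of \<open>N[v]\<close> not yet taken by Staller, and let the potential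
be the total weight. A Staller move on \<open>x\<close> raises the potential by the gain of
\<open>x\<close> (the weight of the neighbourhoods through \<open>x\<close>), a Dominator move on \<open>y\<close>
lowers it by the gain of \<open>y\<close>, and gains only decrease when Dominator moves.
Hence if Dominator always takes a free vertex of maximal gain, the potential never
grows over a round. Initially it is at most \<open>|V| / 2^(\<delta>+1) < 1/2\<close>, and Staller's
first move at most doubles it, so it stays below 1 to the end; but a closed
neighbourhood taken entirely by Staller would have weight 1 on its own.\<close>

definition weight :: "'a set \<Rightarrow> ('a \<Rightarrow> 'a \<Rightarrow> bool) \<Rightarrow> 'a set \<Rightarrow> 'a set \<Rightarrow> 'a \<Rightarrow> real" where
  "weight V E D S v =
     (if closed_nbhd V E v \<inter> D = {} then (1/2) ^ card (closed_nbhd V E v - S) else 0)"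

definition potential :: "'a set \<Rightarrow> ('a \<Rightarrow> 'a \<Rightarrow> bool) \<Rightarrow> 'a set \<Rightarrow> 'a set \<Rightarrow> real" where
  "potential V E D S = (\<Sum>v\<in>V. weight V E D S v)"

definition gain :: "'a set \<Rightarrow> ('a \<Rightarrow> 'a \<Rightarrow> bool) \<Rightarrow> 'a set \<Rightarrow> 'a set \<Rightarrow> 'a \<Rightarrow> real" where
  "gain V E D S x = (\<Sum>v\<in>V. if x \<in> closed_nbhd V E v then weight V E D S v else 0)"

lemma closed_nbhd_subset: "v \<in> V \<Longrightarrow> closed_nbhd V E v \<subseteq> V"
  by (auto simp: closed_nbhd_def nbhd_def)

lemma finite_closed_nbhd: "finite V \<Longrightarrow> finite (closed_nbhd V E v)"
  by (auto simp: closed_nbhd_def nbhd_def)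

lemma card_closed_nbhd:
  assumes "simple_graph V E"
  shows "card (closed_nbhd V E v) = Suc (degree V E v)"
proof -
  have "v \<notin> nbhd V E v" "finite (nbhd V E v)"
    using assms by (auto simp: nbhd_def simple_graph_def)
  then show ?thesis by (simp add: closed_nbhd_def degree_def)
qed

lemma min_degree_le_degree: "finite V \<Longrightarrow> v \<in> V \<Longrightarrow> min_degree V E \<le> degree V E v"
  by (simp add: min_degree_def)

lemma weight_nonneg: "weight V E D S v \<ge> 0"
  by (simp add: weight_def)

lemma gain_nonneg: "gain V E D S x \<ge> 0"
  unfolding gain_def by (rule sum_nonneg) (simp add: weight_nonneg)

lemma gain_le_potential: "gain V E D S x \<le> potential V E D S"
  unfolding gain_def potential_def by (rule sum_mono) (simp add: weight_nonneg)

lemma weight_insert_Dominator: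
  "weight V E (insert y D) S v =
     weight V E D S v - (if y \<in> closed_nbhd V E v then weight V E D S v else 0)"
  by (auto simp: weight_def)

lemma weight_insert_Staller:
  assumes "finite V" "x \<notin> S"
  shows "weight V E D (insert x S) v =
           weight V E D S v + (if x \<in> closed_nbhd V E v then weight V E D S v else 0)"
proof (cases "x \<in> closed_nbhd V E v")
  case True
  let ?F = "closed_nbhd V E v - S"
  have "x \<in> ?F" "finite ?F"
    using True assms(2) finite_closed_nbhd[OF assms(1)] by auto
  then obtain k where k: "card ?F = Suc k" "card (?F - {x}) = k"
    by (metis card_Diff_singleton card_gt_0_iff diff_Suc_1 empty_iff gr0_implies_Suc)
  have "closed_nbhd V E v - insert x S = ?F - {x}"
    by auto
  then show ?thesis
    using True k by (simp add: weight_def)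
next
  case False
  then have "closed_nbhd V E v - insert x S = closed_nbhd V E v - S"
    by auto
  then show ?thesis
    using False by (simp add: weight_def)
qed

lemma potential_insert_Dominator:
  "potential V E (insert y D) S = potential V E D S - gain V E D S y"
  unfolding potential_def gain_def by (simp add: weight_insert_Dominator sum_subtractf)

lemma potential_insert_Staller:
  "finite V \<Longrightarrow> x \<notin> S \<Longrightarrow> potential V E D (insert x S) = potential V E D S + gain V E D S x"
  unfolding potential_def gain_def by (simp add: weight_insert_Staller sum.distrib)

lemma gain_insert_Dominator_le: "gain V E (insert y D) S x \<le> gain V E D S x"
  unfolding gain_def by (rule sum_mono) (auto simp: weight_def)

lemma potential_round_le:
  assumes "finite V" "x \<notin> S" "gain V E D S x \<le> gain V E D S y"
  shows "potential V E (insert y D) (insert x S) \<le> potential V E D S"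
proof -
  have "potential V E (insert y D) (insert x S)
          = potential V E (insert y D) S + gain V E (insert y D) S x"
    using assms(1,2) by (rule potential_insert_Staller)
  also have "\<dots> = potential V E D S - gain V E D S y + gain V E (insert y D) S x"
    by (simp add: potential_insert_Dominator)
  also have "\<dots> \<le> potential V E D S"
    using assms(3) gain_insert_Dominator_le[of V E y D S x] by simp
  finally show ?thesis .
qed

lemma dominating_if_potential_less_1:
  assumes "finite V" "D \<union> S = V" "potential V E D S < 1"
  shows "dominating V E D"
  unfolding dominating_def
proof (intro conjI ballI)
  show "D \<subseteq> V"
    using assms(2) by auto
next
  fix v assume v: "v \<in> V"
  show "closed_nbhd V E v \<inter> D \<noteq> {}"
  proof
    assume undominated: "closed_nbhd V E v \<inter> D = {}"
    then have "closed_nbhd V E v - S = {}"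
      using closed_nbhd_subset[OF v] assms(2) by auto
    then have "card (closed_nbhd V E v - S) = 0"
      by (simp only: card.empty)
    then have "weight V E D S v = 1"
      using undominated by (simp add: weight_def)
    moreover have "weight V E D S v \<le> potential V E D S"
      unfolding potential_def using v assms
      by (intro member_le_sum) (auto simp: weight_nonneg)
    ultimately show False
      using assms(3) by simp
  qed
qed

lemma dom_wins_if_finished:
  "finite V \<Longrightarrow> D \<union> S = V \<Longrightarrow> potential V E D S < 1 \<Longrightarrow> dom_wins V E D S p"
  by (blast intro: dom_wins.finished dominating_if_potential_less_1)

lemma dom_wins_Staller_if_all_replies_win:
  assumes "finite V" "D \<union> S \<subseteq> V" "potential V E D S < 1"
    and "\<And>x. x \<in> V - (D \<union> S) \<Longrightarrow> dom_wins V E D (insert x S) Dominator"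
  shows "dom_wins V E D S Staller"
proof (cases "V - (D \<union> S) = {}")
  case True
  then show ?thesis
    using assms(1-3) by (intro dom_wins_if_finished) auto
next
  case False
  then show ?thesis
    using assms(4) by (blast intro: dom_wins.staller_move)
qed

lemma dom_wins_Dominator_if_potential_less_1:
  assumes "finite V" "D \<union> S \<subseteq> V" "potential V E D S < 1"
  shows "dom_wins V E D S Dominator"
  using assms(2,3)
proof (induction "card (V - (D \<union> S))" arbitrary: D S rule: less_induct)
  case less
  let ?F = "V - (D \<union> S)"
  show ?case
  proof (cases "?F = {}")
    case True
    then show ?thesis
      using assms(1) less.prems by (intro dom_wins_if_finished) auto
  next
    case False
    have "finite ?F"
      using assms(1) by blast
    then have "Max (gain V E D S ` ?F) \<in> gain V E D S ` ?F"
      using False by (intro Max_in) auto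
    then obtain y where y: "y \<in> ?F" and y_max: "gain V E D S y = Max (gain V E D S ` ?F)"
      by (metis imageE)
    have greedy: "gain V E D S x \<le> gain V E D S y" if "x \<in> ?F" for x
      using \<open>finite ?F\<close> that by (simp add: y_max)
    have "dom_wins V E (insert y D) S Staller"
    proof (rule dom_wins_Staller_if_all_replies_win[OF assms(1)])
      show "insert y D \<union> S \<subseteq> V" "potential V E (insert y D) S < 1"
        using y less.prems gain_nonneg[of V E D S y] by (auto simp: potential_insert_Dominator)
    next
      fix x assume x: "x \<in> V - (insert y D \<union> S)"
      have "potential V E (insert y D) (insert x S) \<le> potential V E D S"
        using x greedy by (intro potential_round_le[OF assms(1)]) auto
      then have "potential V E (insert y D) (insert x S) < 1"
        using less.prems by simp
      moreover have "card (V - (insert y D \<union> insert x S)) < card ?F"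
        using x y assms(1) by (intro psubset_card_mono) auto
      ultimately show "dom_wins V E (insert y D) (insert x S) Dominator"
        using less.hyps x y less.prems by auto
    qed
    with y show ?thesis
      by (rule dom_wins.dom_move)
  qed
qed

lemma dom_wins_Staller_if_potential_less_half:
  assumes "finite V" "D \<union> S \<subseteq> V" "potential V E D S < 1/2"
  shows "dom_wins V E D S Staller"
proof (rule dom_wins_Staller_if_all_replies_win)
  fix x assume x: "x \<in> V - (D \<union> S)"
  have "potential V E D (insert x S) \<le> 2 * potential V E D S"
    using x assms(1) gain_le_potential[of V E D S x] by (simp add: potential_insert_Staller)
  then show "dom_wins V E D (insert x S) Dominator"
    using x assms by (intro dom_wins_Dominator_if_potential_less_1) auto
qed (use assms in auto)

lemma potential_empty_le:
  assumes "simple_graph V E"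
  shows "potential V E {} {} \<le> card V * (1/2) ^ Suc (min_degree V E)"
proof -
  have "weight V E {} {} v \<le> (1/2) ^ Suc (min_degree V E)" if "v \<in> V" for v
    using that assms card_closed_nbhd[OF assms, of v]
      min_degree_le_degree[of V v E]
    by (auto simp: weight_def simple_graph_def intro: power_decreasing)
  then have "potential V E {} {} \<le> (\<Sum>v\<in>V. (1/2) ^ Suc (min_degree V E))"
    unfolding potential_def by (intro sum_mono)
  then show ?thesis
    by simp
qed

theorem proposition3:
  fixes V :: "'a set" and E :: "'a \<Rightarrow> 'a \<Rightarrow> bool"
  assumes "simple_graph V E"
    and "card V < 2 ^ min_degree V E"
  shows "dominator_wins_second V E"
proof -
  let ?\<delta> = "min_degree V E"
  have "real (card V) < 2 ^ ?\<delta>"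
    using assms(2) by (metis of_nat_less_iff of_nat_numeral of_nat_power)
  then have "card V * (1/2) ^ Suc ?\<delta> < (1/2 :: real)"
    by (simp add: power_one_over field_simps)
  then have "potential V E {} {} < 1/2"
    using potential_empty_le[OF assms(1)] by linarith
  then show ?thesis
    using assms(1) unfolding dominator_wins_second_def simple_graph_def
    by (intro dom_wins_Staller_if_potential_less_half) auto
qed

end
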